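(* Consider the Que Sera Consensus (QSC) protocol, as described in the context, running on $n$ nodes atop a full-spread threshold synchronous broadcast primitive $\mathrm{TSB}(t_r,t_b,n)$ with $t_r>0$ and $t_b>0$. If QSC delivers history $h_{(s+2)_i}$ on node $i$ at the end of a consensus round starting at time-step $s$, then the resulting history $h_{(s+2)_j}$ of every node $j$ in the same round is identical to $h_{(s+2)_i}$.
   Context: Threshold synchronous broadcast (TSB). A group of $n$ nodes, numbered $1,\dots,n$, operates in integer logical time-steps $0,1,2,\dots$. Nodes may fail only by crashing permanently. In each time-step every non-failed node calls $\mathrm{Broadcast}(m)$ exactly once; the call returns a pair $(R,B)$ of message sets. A primitive provides $\mathrm{TSB}(t_r,t_b,t_s)$ if: (lock-step synchrony) a call to $\mathrm{Broadcast}(m)$ at step $s$ returns at step $s+1$ unless the node fails before reaching step $s+1$; (receive threshold) if node $i$'s call at step $s$ returns $(R,B)$, there is $N_R\subseteq\{1,\dots,n\}$ with $|N_R|\ge t_r$ such that $R$ is exactly the set of messages broadcast by the nodes in $N_R$ during step $s$; (broadcast threshold) there is $N_B\subseteq\{1,\dots,n\}$ with $|N_B|\ge t_b$ such that $B$ is exactly the set of messages broadcast by the nodes in $N_B$ during step $s$; (spread threshold) if some node's call at step $s$ returns $(R,B)$ with $m'\in B$, then there are at least $t_s$ nodes whose receive sets $R$ returned from their step-$s$ calls include $m'$ (a node that fails before completing step $s$ counts if it would have received $m'$ had it not failed). The case $t_s=n$ is called full-spread. Histories and priorities. A proposal is a triple $\langle i,m,r\rangle$ (node, message, numeric priority). A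 history is a finite list of proposals; $[]$ is the empty history and $\|$ is list concatenation. The priority of a nonempty history is the priority $r$ of its last proposal. A history $h$ is best in a set $H$ if $h\in H$ and no $h'\in H$ has strictly greater priority; $h$ is uniquely best in $H$ if $h\in H$ and no other $h'\ne h$ in $H$ has priority greater than or equal to that of $h$. QSC protocol. It is parameterized by functions ChooseMessage (returns some message, possibly empty), Deliver (passes a history to the application), RandomValue (returns a value drawn using node-private randomness from a fixed nontrivial distribution, the same on every node), and Broadcast (the TSB primitive). Each node $i$ runs: set $h\leftarrow[]$; then forever repeat a consensus round: $m\leftarrow\mathrm{ChooseMessage}()$; $r\leftarrow\mathrm{RandomValue}()$; $h'\leftarrow h\,\|\,[\langle i,m,r\rangle]$; $(R',B')\leftarrow\mathrm{Broadcast}(h')$; $h''\leftarrow$ any best history in $B'$; $(R'',B'')\leftarrow\mathrm{Broadcast}(h'')$; $h\leftarrow$ any best history in $R''$; if $h\in B''$ and $h$ is uniquely best in $R'$, call $\mathrm{Deliver}(h)$. Each round thus occupies two time-steps; a round starting at step $s$ ends at step $s+2$. The value of $h$ at the start of a round is the node's initial history for that round, and the value of $h$ assigned from $R''$ (denoted $h_{(s+2)_j}$ for node $j$) is its resulting history for that round. *)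

theory Defs
  imports Main Complex_Main
begin

text \<open>A proposal is a triple (node, message, numeric priority); a history is a list of proposals.\<close>
type_synonym 'm proposal = "nat \<times> 'm \<times> real"
type_synonym 'm history = "'m proposal list"

text \<open>Priority of a nonempty history: priority of its last proposal
  (the value on the empty history is irrelevant: only nonempty histories are ever broadcast).\<close>
definition priority :: "'m history \<Rightarrow> real" where
  "priority h = snd (snd (last h))"

definition is_best :: "'m history \<Rightarrow> 'm history set \<Rightarrow> bool" where
  "is_best h H \<longleftrightarrow> h \<in> H \<and> (\<forall>h'\<in>H. \<not> priority h' > priority h)"

definition uniquely_best :: "'m history \<Rightarrow> 'm history set \<Rightarrow> bool" where
  "uniquely_best h H \<longleftrightarrow> h \<in> H \<and> (\<forall>h'\<in>H. h' \<noteq> h \<longrightarrow> \<not> priority h' \<ge> priority h)"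

text \<open>An execution of the broadcast primitive on nodes 1..n is described by
  \<^item> A s : the set of nodes that call Broadcast at time-step s (non-failed nodes),
  \<^item> msg s j : the message broadcast by node j at step s (meaningful for j in A s),
  \<^item> ret s j : node j's step-s call returns at step s+1 (j did not fail before s+1),
  \<^item> R s j, B s j : the pair of sets returned by node j's step-s call (for nodes that fail,
    R s j is the receive set the node would have had, had it not failed).\<close>
definition tsb ::
  "nat \<Rightarrow> nat \<Rightarrow> nat \<Rightarrow> nat \<Rightarrow> (nat \<Rightarrow> nat set) \<Rightarrow> (nat \<Rightarrow> nat \<Rightarrow> 'a)
   \<Rightarrow> (nat \<Rightarrow> nat \<Rightarrow> bool) \<Rightarrow> (nat \<Rightarrow> nat \<Rightarrow> 'a set) \<Rightarrow> (nat \<Rightarrow> nat \<Rightarrow> 'a set) \<Rightarrow> bool" where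
  "tsb n tr tb ts A msg ret R B \<longleftrightarrow>
     \<comment> \<open>crash failures: the broadcasting nodes are among 1..n, failure is permanent, and a node
        calls Broadcast at step s+1 only if its step-s call returned\<close>
     (\<forall>s. A s \<subseteq> {1..n}) \<and>
     (\<forall>s j. ret s j \<longrightarrow> j \<in> A s) \<and>
     (\<forall>s j. j \<in> A (Suc s) \<longrightarrow> ret s j) \<and>
     \<comment> \<open>receive threshold\<close>
     (\<forall>s j. ret s j \<longrightarrow>
        (\<exists>N \<subseteq> {1..n}. card N \<ge> tr \<and> R s j = msg s ` (N \<inter> A s))) \<and>
     \<comment> \<open>broadcast threshold\<close>
     (\<forall>s j. ret s j \<longrightarrow>
        (\<exists>N \<subseteq> {1..n}. card N \<ge> tb \<and> B s j = msg s ` (N \<inter> A s))) \<and>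
     \<comment> \<open>spread threshold\<close>
     (\<forall>s j m'. ret s j \<longrightarrow> m' \<in> B s j \<longrightarrow>
        card {k \<in> {1..n}. m' \<in> R s k} \<ge> ts)"

text \<open>hres s j is node j's history h at time-step s (the initial history of the round starting at
  even step s, and the resulting history of the round starting at s-2); m s j and r s j are the
  values returned by ChooseMessage and RandomValue in the round starting at s.
  Round starting at s: step s broadcasts h', step s+1 broadcasts h''.\<close>
definition qsc_exec ::
  "nat \<Rightarrow> (nat \<Rightarrow> nat set) \<Rightarrow> (nat \<Rightarrow> nat \<Rightarrow> 'm history) \<Rightarrow> (nat \<Rightarrow> nat \<Rightarrow> bool)
   \<Rightarrow> (nat \<Rightarrow> nat \<Rightarrow> 'm history set) \<Rightarrow> (nat \<Rightarrow> nat \<Rightarrow> 'm history set)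
   \<Rightarrow> (nat \<Rightarrow> nat \<Rightarrow> 'm history) \<Rightarrow> (nat \<Rightarrow> nat \<Rightarrow> 'm) \<Rightarrow> (nat \<Rightarrow> nat \<Rightarrow> real) \<Rightarrow> bool" where
  "qsc_exec n A msg ret R B hres m r \<longleftrightarrow>
     (\<forall>j \<in> {1..n}. hres 0 j = []) \<and>
     (\<forall>s. even s \<longrightarrow>
        (\<forall>j \<in> A s. msg s j = hres s j @ [(j, m s j, r s j)]) \<and>
        (\<forall>j \<in> A (Suc s). is_best (msg (Suc s) j) (B s j)) \<and>
        (\<forall>j. ret (Suc s) j \<longrightarrow> is_best (hres (s + 2) j) (R (Suc s) j)))"

definition qsc_delivers ::
  "(nat \<Rightarrow> nat \<Rightarrow> bool) \<Rightarrow> (nat \<Rightarrow> nat \<Rightarrow> 'm history set) \<Rightarrow> (nat \<Rightarrow> nat \<Rightarrow> 'm history set)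
   \<Rightarrow> (nat \<Rightarrow> nat \<Rightarrow> 'm history) \<Rightarrow> nat \<Rightarrow> nat \<Rightarrow> bool" where
  "qsc_delivers ret R B hres s i \<longleftrightarrow>
     ret (Suc s) i \<and> hres (s + 2) i \<in> B (Suc s) i \<and> uniquely_best (hres (s + 2) i) (R s i)"

end

theory Submission
  imports Defs
begin

text \<open>Under full spread, a history that some node sees in its broadcast set \<open>B\<close> reaches the
  receive set \<open>R\<close> of every node. The delivered history \<open>h\<close> of node \<open>i\<close> lies in its \<open>B''\<close>, so it
  reaches every \<open>R''\<close>, and the resulting history of any node \<open>j\<close> has priority at least that of
  \<open>h\<close>. That resulting history was itself chosen as best in some \<open>B'\<close>, so it also reached \<open>R'\<close>
  of node \<open>i\<close>, where \<open>h\<close> is uniquely best; hence the two coincide.\<close>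

lemma card_filter_ge_card_imp_all:
  assumes "finite S" "card S \<le> card {x \<in> S. P x}" "x \<in> S"
  shows "P x"
proof -
  have "{x \<in> S. P x} = S"
    using assms(1,2) by (intro card_subset_eq) (auto intro: le_antisym card_mono)
  with assms(3) show ?thesis by blast
qed

lemma is_best_priority_ge:
  "is_best h H \<Longrightarrow> h' \<in> H \<Longrightarrow> priority h' \<le> priority h"
  unfolding is_best_def by force

lemma uniquely_best_unique:
  "uniquely_best h H \<Longrightarrow> h' \<in> H \<Longrightarrow> priority h \<le> priority h' \<Longrightarrow> h' = h"
  unfolding uniquely_best_def by blast

lemma tsb_ret_node:
  "tsb n tr tb ts A msg ret R B \<Longrightarrow> ret s j \<Longrightarrow> j \<in> {1..n}"
  unfolding tsb_def by (meson subsetD)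

lemma tsb_ret_if_active:
  "tsb n tr tb ts A msg ret R B \<Longrightarrow> j \<in> A (Suc s) \<Longrightarrow> ret s j"
  unfolding tsb_def by simp

lemma tsb_received_is_broadcast:
  assumes "tsb n tr tb ts A msg ret R B" "ret s j" "x \<in> R s j"
  obtains k where "k \<in> A s" "x = msg s k"
proof -
  obtain N where "R s j = msg s ` (N \<inter> A s)"
    using assms(1,2) unfolding tsb_def by meson
  with assms(3) that show ?thesis by blast
qed

lemma tsb_full_spread:
  assumes "tsb n tr tb n A msg ret R B" "ret s j" "x \<in> B s j" "k \<in> {1..n}"
  shows "x \<in> R s k"
proof (rule card_filter_ge_card_imp_all[where P = "\<lambda>k. x \<in> R s k"])
  have "n \<le> card {k \<in> {1..n}. x \<in> R s k}"
    using assms(1-3) unfolding tsb_def by meson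
  then show "card {1..n} \<le> card {k \<in> {1..n}. x \<in> R s k}"
    by simp
qed (use assms(4) in simp_all)

lemma qsc_second_broadcast_in_first_B:
  "qsc_exec n A msg ret R B hres m r \<Longrightarrow> even s \<Longrightarrow> k \<in> A (Suc s) \<Longrightarrow> msg (Suc s) k \<in> B s k"
  unfolding qsc_exec_def is_best_def by blast

lemma qsc_result_is_best:
  "qsc_exec n A msg ret R B hres m r \<Longrightarrow> even s \<Longrightarrow> ret (Suc s) j
    \<Longrightarrow> is_best (hres (s + 2) j) (R (Suc s) j)"
  unfolding qsc_exec_def by blast

lemma qsc_result_received_in_first_step:
  assumes tsb: "tsb n tr tb n A msg ret R B"
    and qsc: "qsc_exec n A msg ret R B hres m r"
    and "even s" "ret (Suc s) j" "i \<in> {1..n}"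
  shows "hres (s + 2) j \<in> R s i"
proof -
  have "hres (s + 2) j \<in> R (Suc s) j"
    using qsc_result_is_best[OF qsc \<open>even s\<close> \<open>ret (Suc s) j\<close>] unfolding is_best_def by blast
  then obtain k where k: "k \<in> A (Suc s)" "hres (s + 2) j = msg (Suc s) k"
    using tsb_received_is_broadcast[OF tsb \<open>ret (Suc s) j\<close>] by metis
  have "hres (s + 2) j \<in> B s k"
    using qsc_second_broadcast_in_first_B[OF qsc \<open>even s\<close> k(1)] k(2) by simp
  with tsb_ret_if_active[OF tsb k(1)] show ?thesis
    using tsb_full_spread[OF tsb] \<open>i \<in> {1..n}\<close> by blast
qed

theorem lemma3:
  fixes n tr tb :: nat
    and A :: "nat \<Rightarrow> nat set"
    and msg :: "nat \<Rightarrow> nat \<Rightarrow> 'm history"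
    and ret :: "nat \<Rightarrow> nat \<Rightarrow> bool"
    and R B :: "nat \<Rightarrow> nat \<Rightarrow> 'm history set"
    and hres :: "nat \<Rightarrow> nat \<Rightarrow> 'm history"
    and m :: "nat \<Rightarrow> nat \<Rightarrow> 'm" and r :: "nat \<Rightarrow> nat \<Rightarrow> real"
  assumes "tsb n tr tb n A msg ret R B"
    and "tr > 0" and "tb > 0"
    and "qsc_exec n A msg ret R B hres m r"
    and "even s"
    and "qsc_delivers ret R B hres s i"
    and "ret (Suc s) j"
  shows "hres (s + 2) j = hres (s + 2) i"
proof -
  note tsb = assms(1) and qsc = assms(4)
  have ret_i: "ret (Suc s) i" and delivered_B: "hres (s + 2) i \<in> B (Suc s) i"
    and unique: "uniquely_best (hres (s + 2) i) (R s i)"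
    using assms(6) unfolding qsc_delivers_def by auto
  have "hres (s + 2) i \<in> R (Suc s) j"
    using tsb_full_spread[OF tsb ret_i delivered_B tsb_ret_node[OF tsb assms(7)]] .
  then have "priority (hres (s + 2) i) \<le> priority (hres (s + 2) j)"
    using is_best_priority_ge qsc_result_is_best[OF qsc assms(5,7)] by blast
  moreover have "hres (s + 2) j \<in> R s i"
    using qsc_result_received_in_first_step[OF tsb qsc assms(5,7)]
      tsb_ret_node[OF tsb ret_i] by blast
  ultimately show ?thesis
    using uniquely_best_unique[OF unique] by blast
qed

end
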